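(* A $T_1$-space $X$ has a regular base at non-isolated points if and only if $X$ is a Hausdorff paracompact space with a development at non-isolated points.
   Context: $I(X)$ is the set of isolated points of $X$, $\mathrm{st}(A,\mathcal{W})=\bigcup\{W\in\mathcal{W}:W\cap A\neq\emptyset\}$. A base $\mathcal{B}$ is regular at $x$ if for every neighborhood $U$ of $x$ there is an open $V$ with $x\in V\subset U$ such that $\{B\in\mathcal{B}: B\cap V\neq\emptyset,\ B\not\subset U\}$ is finite; it is a regular base at non-isolated points if it is regular at every $x\in X\setminus I(X)$. A sequence $\{\mathcal{W}_i\}_{i\in\mathbb{N}}$ of open covers of $X$ is a development at non-isolated points if for every $x\in X\setminus I(X)$ and every open neighborhood $U$ of $x$ there are an open neighborhood $V$ of $x$ and $i\in\mathbb{N}$ with $\mathrm{st}(V,\mathcal{W}_i)\subset U$. *)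

theory Defs
  imports "HOL-Analysis.Analysis"
begin

definition isolated_points :: "'a topology \<Rightarrow> 'a set" where
  "isolated_points X = {x \<in> topspace X. openin X {x}}"

definition open_cover_of :: "'a topology \<Rightarrow> 'a set set \<Rightarrow> bool" where
  "open_cover_of X \<U> \<longleftrightarrow> (\<forall>U\<in>\<U>. openin X U) \<and> \<Union>\<U> = topspace X"

definition is_base_of :: "'a topology \<Rightarrow> 'a set set \<Rightarrow> bool" where
  "is_base_of X \<B> \<longleftrightarrow> (\<forall>B\<in>\<B>. openin X B) \<and>
     (\<forall>U x. openin X U \<and> x \<in> U \<longrightarrow> (\<exists>B\<in>\<B>. x \<in> B \<and> B \<subseteq> U))"

text \<open>U ranges over open neighbourhoods of x (equivalent to arbitrary neighbourhoods).\<close>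
definition regular_at :: "'a topology \<Rightarrow> 'a set set \<Rightarrow> 'a \<Rightarrow> bool" where
  "regular_at X \<B> x \<longleftrightarrow>
     (\<forall>U. openin X U \<and> x \<in> U \<longrightarrow>
        (\<exists>V. openin X V \<and> x \<in> V \<and> V \<subseteq> U \<and>
             finite {B \<in> \<B>. B \<inter> V \<noteq> {} \<and> \<not> B \<subseteq> U}))"

definition regular_base_at_nonisolated :: "'a topology \<Rightarrow> 'a set set \<Rightarrow> bool" where
  "regular_base_at_nonisolated X \<B> \<longleftrightarrow>
     is_base_of X \<B> \<and> (\<forall>x \<in> topspace X - isolated_points X. regular_at X \<B> x)"

definition paracompact_space :: "'a topology \<Rightarrow> bool" where
  "paracompact_space X \<longleftrightarrow>
     (\<forall>\<U>. open_cover_of X \<U> \<longrightarrow>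
        (\<exists>\<V>. open_cover_of X \<V> \<and> locally_finite_in X \<V> \<and>
             (\<forall>V\<in>\<V>. \<exists>U\<in>\<U>. V \<subseteq> U)))"

definition star :: "'a set \<Rightarrow> 'a set set \<Rightarrow> 'a set" where
  "star A \<W> = \<Union>{W \<in> \<W>. W \<inter> A \<noteq> {}}"

definition development_at_nonisolated :: "'a topology \<Rightarrow> (nat \<Rightarrow> 'a set set) \<Rightarrow> bool" where
  "development_at_nonisolated X \<W> \<longleftrightarrow>
     (\<forall>i. open_cover_of X (\<W> i)) \<and>
     (\<forall>x \<in> topspace X - isolated_points X. \<forall>U. openin X U \<and> x \<in> U \<longrightarrow>
        (\<exists>V i. openin X V \<and> x \<in> V \<and> star V (\<W> i) \<subseteq> U))"

end

theory Submission
  imports Defs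
begin

(*
  Forward direction, for a regular base B:
  - every B-member containing a non-isolated point x has only finitely many
    strict supersets in B (regularity applied to that member);
  - Hausdorff: regularity at x applied to X - {y} leaves finitely many members
    meeting a neighbourhood of x and containing y; deleting one other point from
    each (T1) gives a neighbourhood of y missing them all;
  - paracompact: the maximal members of B lying inside some member of a cover
    cover the non-isolated points and are locally finite there; singletons of
    the remaining (isolated) points complete a locally finite refinement;
  - development: the n-th cover consists of the members with at least n strict
    supersets (plus isolated singletons).
  Converse: refine the finite intersections of the first n+1 covers of the
  development by a locally finite open cover L n; the union of all L n, plus
  isolated singletons, is a regular base at non-isolated points.
*)

lemma openin_diff_finite:
  assumes "t1_space X" "openin X U" "finite Z"
  shows "openin X (U - Z)"
proof -
  have "closedin X (topspace X \<inter> Z)"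
    using assms(1,3) t1_space_closedin_finite by blast
  then have "openin X (U - topspace X \<inter> Z)"
    using assms(2) openin_diff by blast
  moreover have "U - topspace X \<inter> Z = U - Z"
    using openin_subset[OF assms(2)] by auto
  ultimately show ?thesis by simp
qed

lemma nonisolated_open_other:
  assumes "openin X B" "x \<in> B" "x \<in> topspace X - isolated_points X"
  shows "\<exists>z\<in>B. z \<noteq> x"
proof -
  have "B \<noteq> {x}"
    using assms unfolding isolated_points_def by auto
  then show ?thesis using assms(2) by blast
qed

lemma openin_isolated_singleton: "x \<in> isolated_points X \<Longrightarrow> openin X {x}"
  unfolding isolated_points_def by simp

lemma subset_star:
  assumes "open_cover_of X \<W>" "V \<subseteq> topspace X"
  shows "V \<subseteq> star V \<W>"
  using assms unfolding open_cover_of_def star_def by blast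

section \<open>Consequences of a regular base\<close>

lemma regular_atE:
  assumes "regular_at X \<B> x" "openin X U" "x \<in> U"
  obtains V where "openin X V" "x \<in> V" "V \<subseteq> U"
    "finite {B \<in> \<B>. B \<inter> V \<noteq> {} \<and> \<not> B \<subseteq> U}"
  using assms unfolding regular_at_def by blast

definition strict_supersets :: "'a set set \<Rightarrow> 'a set \<Rightarrow> 'a set set" where
  "strict_supersets \<B> S = {B \<in> \<B>. S \<subset> B}"

text \<open>If \<open>\<B>\<close> is regular at a point \<open>x\<close> of an open set \<open>S\<close>, then only finitely
  many members of \<open>\<B>\<close> strictly contain \<open>S\<close>: they all meet the neighbourhood
  provided by regularity and are not contained in \<open>S\<close>.\<close>
lemma regular_at_finite_strict_supersets:
  assumes "regular_at X \<B> x" "openin X S" "x \<in> S"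
  shows "finite (strict_supersets \<B> S)"
proof -
  obtain V where "openin X V" and V: "x \<in> V" "V \<subseteq> S"
    and fin: "finite {B \<in> \<B>. B \<inter> V \<noteq> {} \<and> \<not> B \<subseteq> S}"
    using assms by (rule regular_atE)
  have "strict_supersets \<B> S \<subseteq> {B \<in> \<B>. B \<inter> V \<noteq> {} \<and> \<not> B \<subseteq> S}"
    using V unfolding strict_supersets_def by auto
  then show ?thesis using fin finite_subset by blast
qed

lemma regular_at_separates:
  assumes t1: "t1_space X" and base: "is_base_of X \<B>" and reg: "regular_at X \<B> x"
    and x: "x \<in> topspace X" and y: "y \<in> topspace X - isolated_points X" and "x \<noteq> y"
  shows "\<exists>U V. openin X U \<and> openin X V \<and> x \<in> U \<and> y \<in> V \<and> disjnt U V"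
proof -
  have "openin X (topspace X - {y})" "x \<in> topspace X - {y}"
    using openin_diff_finite[OF t1 openin_topspace, of "{y}"] x \<open>x \<noteq> y\<close> by auto
  then obtain V where V: "openin X V" "x \<in> V" "V \<subseteq> topspace X - {y}"
    and fin: "finite {B \<in> \<B>. B \<inter> V \<noteq> {} \<and> \<not> B \<subseteq> topspace X - {y}}"
    by (rule regular_atE[OF reg])
  define F where "F = {B \<in> \<B>. B \<inter> V \<noteq> {} \<and> \<not> B \<subseteq> topspace X - {y}}"
  have "\<exists>z\<in>B. z \<noteq> y" if "B \<in> F" for B
  proof -
    have B_open: "openin X B" using that base unfolding F_def is_base_of_def by blast
    moreover have "y \<in> B" using that openin_subset[OF B_open] unfolding F_def by blast
    ultimately show ?thesis by (rule nonisolated_open_other[OF _ _ y])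
  qed
  then obtain g where g: "\<And>B. B \<in> F \<Longrightarrow> g B \<in> B \<and> g B \<noteq> y" by metis
  have "openin X (topspace X - g ` F)"
    using openin_diff_finite[OF t1] fin unfolding F_def by auto
  moreover have "y \<in> topspace X - g ` F" using y g by auto
  ultimately obtain B' where B': "B' \<in> \<B>" "y \<in> B'" "B' \<subseteq> topspace X - g ` F"
    using base unfolding is_base_of_def by blast
  have "B' \<notin> F" using g B' by blast
  then have "B' \<inter> V = {}" using B' unfolding F_def by blast
  then show ?thesis
    using V B' base unfolding is_base_of_def disjnt_def by blast
qed

lemma regular_base_Hausdorff:
  assumes t1: "t1_space X" and R: "regular_base_at_nonisolated X \<B>"
  shows "Hausdorff_space X"
  unfolding Hausdorff_space_def
proof (intro allI impI)
  fix x y assume xy: "x \<in> topspace X \<and> y \<in> topspace X \<and> x \<noteq> y"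
  have base: "is_base_of X \<B>"
    using R by (simp add: regular_base_at_nonisolated_def)
  have isolated_sep: "openin X {a} \<and> openin X (topspace X - {a}) \<and> b \<in> topspace X - {a}
                      \<and> disjnt {a} (topspace X - {a})"
    if "a \<in> isolated_points X" "b \<in> topspace X" "a \<noteq> b" for a b
    using that openin_isolated_singleton openin_diff_finite[OF t1 openin_topspace, of "{a}"]
    by (simp add: disjnt_def)
  show "\<exists>U V. openin X U \<and> openin X V \<and> x \<in> U \<and> y \<in> V \<and> disjnt U V"
  proof (cases "x \<in> isolated_points X")
    case True
    then show ?thesis
      using isolated_sep[of x y] xy by (intro exI[of _ "{x}"] exI[of _ "topspace X - {x}"]) simp
  next
    case x_noniso: False
    show ?thesis
    proof (cases "y \<in> isolated_points X")
      case True
      then show ?thesis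
        using isolated_sep[of y x] xy
        by (intro exI[of _ "topspace X - {y}"] exI[of _ "{y}"]) (auto simp: disjnt_def)
    next
      case False
      have reg: "regular_at X \<B> x"
        using R xy x_noniso by (simp add: regular_base_at_nonisolated_def)
      have x: "x \<in> topspace X" and y: "y \<in> topspace X - isolated_points X" and "x \<noteq> y"
        using xy False by auto
      show ?thesis by (rule regular_at_separates[OF t1 base reg x y \<open>x \<noteq> y\<close>])
    qed
  qed
qed

subsection \<open>Paracompactness\<close>

definition maximal_members :: "'a set set \<Rightarrow> 'a set set" where
  "maximal_members \<P> = {B \<in> \<P>. \<forall>B' \<in> \<P>. B \<subseteq> B' \<longrightarrow> B' = B}"

lemma maximal_members_at_regular_point:
  assumes base: "is_base_of X \<B>" and reg: "regular_at X \<B> x"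
    and P: "\<P> \<subseteq> \<B>" and B0: "B0 \<in> \<P>" "x \<in> B0"
  shows "x \<in> \<Union>(maximal_members \<P>)"
    and "\<exists>W. openin X W \<and> x \<in> W \<and> finite {m \<in> maximal_members \<P>. m \<inter> W \<noteq> {}}"
proof -
  have B0_open: "openin X B0" using base P B0 unfolding is_base_of_def by blast
  define S where "S = {B \<in> \<P>. B0 \<subseteq> B}"
  have "S \<subseteq> insert B0 (strict_supersets \<B> B0)"
    using P unfolding S_def strict_supersets_def by auto
  then have "finite S"
    using regular_at_finite_strict_supersets[OF reg B0_open B0(2)] finite_subset by blast
  moreover have "B0 \<in> S" using B0 unfolding S_def by auto
  ultimately obtain m where m: "m \<in> S" "B0 \<subseteq> m" "\<forall>b\<in>S. m \<subseteq> b \<longrightarrow> m = b"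
    using finite_has_maximal2[of S B0] by auto
  then have "m \<in> maximal_members \<P>"
    unfolding maximal_members_def S_def by fastforce
  then show "x \<in> \<Union>(maximal_members \<P>)" using m(2) B0(2) by blast
  obtain V where V: "openin X V" "x \<in> V" "V \<subseteq> B0"
    and fin: "finite {B \<in> \<B>. B \<inter> V \<noteq> {} \<and> \<not> B \<subseteq> B0}"
    by (rule regular_atE[OF reg B0_open B0(2)])
  text \<open>A maximal member inside \<open>B0\<close> must be \<open>B0\<close> itself.\<close>
  have "{m \<in> maximal_members \<P>. m \<inter> V \<noteq> {}} \<subseteq> insert B0 {B \<in> \<B>. B \<inter> V \<noteq> {} \<and> \<not> B \<subseteq> B0}"
    using P B0(1) unfolding maximal_members_def by auto
  then have "finite {m \<in> maximal_members \<P>. m \<inter> V \<noteq> {}}"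
    using fin finite_subset by blast
  then show "\<exists>W. openin X W \<and> x \<in> W \<and> finite {m \<in> maximal_members \<P>. m \<inter> W \<noteq> {}}"
    using V by blast
qed

text \<open>To refine an open cover \<open>\<A>\<close> locally finitely it suffices to find open sets
  inside members of \<open>\<A>\<close> covering the non-isolated points and locally finite at them:
  cut them down to the open set \<open>C\<close> of points of local finiteness and add the
  singletons of the (isolated) points left uncovered.\<close>
lemma locally_finite_refinement_from_nonisolated:
  assumes A: "open_cover_of X \<A>"
    and M_open: "\<And>m. m \<in> \<M> \<Longrightarrow> openin X m"
    and M_refines: "\<And>m. m \<in> \<M> \<Longrightarrow> \<exists>U\<in>\<A>. m \<subseteq> U"
    and M_covers: "topspace X - isolated_points X \<subseteq> \<Union>\<M>"
    and M_lf: "\<And>x. x \<in> topspace X - isolated_points X \<Longrightarrow>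
                 \<exists>W. openin X W \<and> x \<in> W \<and> finite {m \<in> \<M>. m \<inter> W \<noteq> {}}"
  shows "\<exists>\<R>. open_cover_of X \<R> \<and> locally_finite_in X \<R> \<and> (\<forall>r\<in>\<R>. \<exists>U\<in>\<A>. r \<subseteq> U)"
proof -
  define C where "C = \<Union>{W. openin X W \<and> finite {m \<in> \<M>. m \<inter> W \<noteq> {}}}"
  define D where "D = \<Union>\<M> \<inter> C"
  define \<R> where "\<R> = (\<lambda>m. m \<inter> C) ` \<M> \<union> (\<lambda>x. {x}) ` (topspace X - D)"
  have C_open: "openin X C" unfolding C_def by (rule openin_Union) blast
  have D_open: "openin X D"
    unfolding D_def using M_open C_open by (intro openin_Int openin_Union) auto
  have M_top: "\<Union>\<M> \<subseteq> topspace X" using M_open openin_subset by blast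
  have nonisolated_in_D: "topspace X - isolated_points X \<subseteq> D"
  proof
    fix x assume x: "x \<in> topspace X - isolated_points X"
    obtain W where "openin X W" "x \<in> W" "finite {m \<in> \<M>. m \<inter> W \<noteq> {}}"
      using M_lf[OF x] by blast
    then have "x \<in> C" unfolding C_def by blast
    moreover have "x \<in> \<Union>\<M>" using M_covers x by blast
    ultimately show "x \<in> D" unfolding D_def by blast
  qed
  have outside_D: "openin X {x}" if "x \<in> topspace X" "x \<notin> D" for x
  proof -
    have "x \<in> isolated_points X" using that nonisolated_in_D by blast
    then show ?thesis by (rule openin_isolated_singleton)
  qed
  have R_open: "\<forall>r\<in>\<R>. openin X r"
    unfolding \<R>_def using M_open C_open outside_D by auto
  have R_union: "\<Union>\<R> = topspace X"
    unfolding \<R>_def D_def using M_top by auto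
  have R_lf: "\<exists>V. openin X V \<and> x \<in> V \<and> finite {r \<in> \<R>. r \<inter> V \<noteq> {}}"
    if x: "x \<in> topspace X" for x
  proof (cases "x \<in> D")
    case True
    then obtain W where W: "openin X W" "x \<in> W" "finite {m \<in> \<M>. m \<inter> W \<noteq> {}}"
      unfolding D_def C_def by blast
    have "{r \<in> \<R>. r \<inter> (W \<inter> D) \<noteq> {}} \<subseteq> (\<lambda>m. m \<inter> C) ` {m \<in> \<M>. m \<inter> W \<noteq> {}}"
      unfolding \<R>_def by auto
    then have "finite {r \<in> \<R>. r \<inter> (W \<inter> D) \<noteq> {}}"
      by (rule finite_subset) (simp add: W(3))
    moreover have "openin X (W \<inter> D)" using W(1) D_open by (rule openin_Int)
    ultimately show ?thesis using W(2) True by blast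
  next
    case False
    have "{r \<in> \<R>. r \<inter> {x} \<noteq> {}} \<subseteq> {{x}}"
      using False unfolding \<R>_def D_def by auto
    then have "finite {r \<in> \<R>. r \<inter> {x} \<noteq> {}}" using finite_subset by auto
    then show ?thesis using outside_D[OF x False] by blast
  qed
  have R_refines: "\<exists>U\<in>\<A>. r \<subseteq> U" if r: "r \<in> \<R>" for r
  proof -
    consider m where "m \<in> \<M>" "r = m \<inter> C" | x where "x \<in> topspace X" "r = {x}"
      using r unfolding \<R>_def by blast
    then show ?thesis
    proof cases
      case 1
      then show ?thesis using M_refines by blast
    next
      case 2
      then show ?thesis using A unfolding open_cover_of_def by blast
    qed
  qed
  have "open_cover_of X \<R>"
    using R_open R_union by (simp add: open_cover_of_def)
  moreover have "locally_finite_in X \<R>"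
    using R_lf by (simp add: locally_finite_in_def R_union)
  ultimately show ?thesis
    using R_refines by blast
qed

text \<open>Paracompactness: apply the previous lemma to the maximal members of the base
  lying inside some member of the given cover.\<close>
lemma regular_base_paracompact:
  assumes R: "regular_base_at_nonisolated X \<B>"
  shows "paracompact_space X"
  unfolding paracompact_space_def
proof (intro allI impI)
  fix \<A> assume A: "open_cover_of X \<A>"
  have base: "is_base_of X \<B>"
    and reg: "\<And>x. x \<in> topspace X - isolated_points X \<Longrightarrow> regular_at X \<B> x"
    using R unfolding regular_base_at_nonisolated_def by auto
  define \<P> where "\<P> = {B \<in> \<B>. \<exists>U\<in>\<A>. B \<subseteq> U}"
  have P_sub: "\<P> \<subseteq> \<B>" unfolding \<P>_def by blast
  have max: "x \<in> \<Union>(maximal_members \<P>) \<and>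
      (\<exists>W. openin X W \<and> x \<in> W \<and> finite {m \<in> maximal_members \<P>. m \<inter> W \<noteq> {}})"
    if x: "x \<in> topspace X - isolated_points X" for x
  proof -
    obtain U where U: "U \<in> \<A>" "x \<in> U" using x A unfolding open_cover_of_def by blast
    have "openin X U" using U(1) A unfolding open_cover_of_def by blast
    then obtain B0 where B0: "B0 \<in> \<B>" "x \<in> B0" "B0 \<subseteq> U"
      using base U(2) unfolding is_base_of_def by blast
    then have "B0 \<in> \<P>" using U(1) unfolding \<P>_def by blast
    then show ?thesis
      using maximal_members_at_regular_point[OF base reg[OF x] P_sub _ B0(2)] by blast
  qed
  show "\<exists>\<V>. open_cover_of X \<V> \<and> locally_finite_in X \<V> \<and> (\<forall>V\<in>\<V>. \<exists>U\<in>\<A>. V \<subseteq> U)"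
  proof (rule locally_finite_refinement_from_nonisolated[OF A])
    show "openin X m" if "m \<in> maximal_members \<P>" for m
      using that P_sub base unfolding maximal_members_def is_base_of_def by blast
    show "\<exists>U\<in>\<A>. m \<subseteq> U" if "m \<in> maximal_members \<P>" for m
      using that unfolding maximal_members_def \<P>_def by blast
    show "topspace X - isolated_points X \<subseteq> \<Union>(maximal_members \<P>)"
      using max by blast
    show "\<exists>W. openin X W \<and> x \<in> W \<and> finite {m \<in> maximal_members \<P>. m \<inter> W \<noteq> {}}"
      if "x \<in> topspace X - isolated_points X" for x
      using max[OF that] by blast
  qed
qed

subsection \<open>A development from the heights of base members\<close>

text \<open>Below a non-isolated point the number of strict supersets is unbounded: removing
  a second point from a member and shrinking inside the base gives a member with
  strictly more strict supersets (T1 is needed for the removal).\<close>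
lemma regular_base_unbounded_height:
  assumes t1: "t1_space X" and R: "regular_base_at_nonisolated X \<B>"
    and x: "x \<in> topspace X - isolated_points X"
  shows "\<exists>B\<in>\<B>. x \<in> B \<and> n \<le> card (strict_supersets \<B> B)"
proof -
  have base: "is_base_of X \<B>" and reg: "regular_at X \<B> x"
    using R x unfolding regular_base_at_nonisolated_def by auto
  show ?thesis
  proof (induction n)
    case 0
    show ?case using base x unfolding is_base_of_def by blast
  next
    case (Suc n)
    then obtain B where B: "B \<in> \<B>" "x \<in> B" "n \<le> card (strict_supersets \<B> B)" by blast
    have B_open: "openin X B" using base B(1) unfolding is_base_of_def by blast
    obtain z where z: "z \<in> B" "z \<noteq> x" using nonisolated_open_other[OF B_open B(2) x] by blast
    have "openin X (B - {z})" using openin_diff_finite[OF t1 B_open] by blast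
    then obtain B' where B': "B' \<in> \<B>" "x \<in> B'" "B' \<subseteq> B - {z}"
      using base B(2) z(2) unfolding is_base_of_def by blast
    have B'_open: "openin X B'" using base B'(1) unfolding is_base_of_def by blast
    have sub: "insert B (strict_supersets \<B> B) \<subseteq> strict_supersets \<B> B'"
      using B' B z unfolding strict_supersets_def by auto
    have "Suc (card (strict_supersets \<B> B)) = card (insert B (strict_supersets \<B> B))"
      using regular_at_finite_strict_supersets[OF reg B_open B(2)]
      by (simp add: strict_supersets_def)
    also have "\<dots> \<le> card (strict_supersets \<B> B')"
      using card_mono[OF regular_at_finite_strict_supersets[OF reg B'_open B'(2)] sub] .
    finally show ?case using B' B(3) by auto
  qed
qed

definition height_cover :: "'a topology \<Rightarrow> 'a set set \<Rightarrow> nat \<Rightarrow> 'a set set" where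
  "height_cover X \<B> n =
     {B \<in> \<B>. finite (strict_supersets \<B> B) \<and> n \<le> card (strict_supersets \<B> B)}
     \<union> (\<lambda>x. {x}) ` isolated_points X"

text \<open>Each height cover is an open cover: non-isolated points lie in members of
  arbitrary height, isolated points in their singletons.\<close>
lemma height_cover_open_cover:
  assumes t1: "t1_space X" and R: "regular_base_at_nonisolated X \<B>"
  shows "open_cover_of X (height_cover X \<B> n)"
proof -
  have base: "is_base_of X \<B>"
    and reg: "\<And>x. x \<in> topspace X - isolated_points X \<Longrightarrow> regular_at X \<B> x"
    using R unfolding regular_base_at_nonisolated_def by auto
  have members_open: "\<forall>U \<in> height_cover X \<B> n. openin X U"
    using base openin_isolated_singleton
    unfolding height_cover_def is_base_of_def by auto
  have covers: "x \<in> \<Union>(height_cover X \<B> n)" if "x \<in> topspace X" for x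
  proof (cases "x \<in> isolated_points X")
    case True
    then have "{x} \<in> height_cover X \<B> n" unfolding height_cover_def by blast
    then show ?thesis by blast
  next
    case False
    with that have x: "x \<in> topspace X - isolated_points X" by blast
    obtain B where B: "B \<in> \<B>" "x \<in> B" "n \<le> card (strict_supersets \<B> B)"
      using regular_base_unbounded_height[OF t1 R x] by blast
    have "openin X B" using base B(1) unfolding is_base_of_def by blast
    then have "finite (strict_supersets \<B> B)"
      using regular_at_finite_strict_supersets[OF reg[OF x]] B(2) by blast
    then have "B \<in> height_cover X \<B> n"
      using B unfolding height_cover_def by blast
    then show ?thesis using B(2) by blast
  qed
  have "\<Union>(height_cover X \<B> n) \<subseteq> topspace X"
    using members_open openin_subset by blast
  with covers have "\<Union>(height_cover X \<B> n) = topspace X" by blast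
  with members_open show ?thesis unfolding open_cover_of_def by blast
qed

text \<open>Regularity at \<open>x\<close> leaves finitely many members meeting a neighbourhood \<open>V\<close> of
  \<open>x\<close> and escaping \<open>U\<close>; a cover of large enough height excludes all of them, so
  its star of \<open>V\<close> stays in \<open>U\<close>.\<close>
lemma height_cover_star:
  assumes reg: "regular_at X \<B> x" and U: "openin X U" "x \<in> U"
  shows "\<exists>V i. openin X V \<and> x \<in> V \<and> star V (height_cover X \<B> i) \<subseteq> U"
proof -
  obtain V where V: "openin X V" "x \<in> V" "V \<subseteq> U"
    and fin: "finite {B \<in> \<B>. B \<inter> V \<noteq> {} \<and> \<not> B \<subseteq> U}"
    by (rule regular_atE[OF reg U])
  define F where "F = {B \<in> \<B>. B \<inter> V \<noteq> {} \<and> \<not> B \<subseteq> U}"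
  define n where "n = Suc (\<Sum>B\<in>F. card (strict_supersets \<B> B))"
  have "w \<subseteq> U" if w: "w \<in> height_cover X \<B> n" "w \<inter> V \<noteq> {}" for w
  proof (rule ccontr)
    assume escapes: "\<not> w \<subseteq> U"
    then have "w \<notin> (\<lambda>x. {x}) ` isolated_points X" using w(2) V(3) by auto
    then have "w \<in> \<B>" "n \<le> card (strict_supersets \<B> w)"
      using w(1) unfolding height_cover_def by auto
    moreover have "w \<in> F" using calculation(1) w(2) escapes unfolding F_def by blast
    then have "card (strict_supersets \<B> w) \<le> (\<Sum>B\<in>F. card (strict_supersets \<B> B))"
      using fin unfolding F_def[symmetric] by (intro member_le_sum) auto
    ultimately show False unfolding n_def by simp
  qed
  then have "star V (height_cover X \<B> n) \<subseteq> U" unfolding star_def by blast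
  then show ?thesis using V by blast
qed

lemma regular_base_development:
  assumes t1: "t1_space X" and R: "regular_base_at_nonisolated X \<B>"
  shows "development_at_nonisolated X (height_cover X \<B>)"
proof -
  have "\<forall>i. open_cover_of X (height_cover X \<B> i)"
    using height_cover_open_cover[OF t1 R] by blast
  moreover have "\<forall>x \<in> topspace X - isolated_points X. \<forall>U. openin X U \<and> x \<in> U \<longrightarrow>
      (\<exists>V i. openin X V \<and> x \<in> V \<and> star V (height_cover X \<B> i) \<subseteq> U)"
  proof (intro ballI allI impI)
    fix x U assume x: "x \<in> topspace X - isolated_points X" and U: "openin X U \<and> x \<in> U"
    have "regular_at X \<B> x" using R x unfolding regular_base_at_nonisolated_def by blast
    then show "\<exists>V i. openin X V \<and> x \<in> V \<and> star V (height_cover X \<B> i) \<subseteq> U"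
      by (rule height_cover_star) (use U in auto)
  qed
  ultimately show ?thesis
    unfolding development_at_nonisolated_def by (rule conjI)
qed

section \<open>From paracompactness and a development to a regular base\<close>

lemma common_refinement_open_cover:
  fixes \<W> :: "nat \<Rightarrow> 'a set set"
  assumes covers: "\<And>i. open_cover_of X (\<W> i)"
  shows "open_cover_of X {A. openin X A \<and> (\<forall>k\<le>n. \<exists>w\<in>\<W> k. A \<subseteq> w)}"
proof -
  have "x \<in> \<Union>{A. openin X A \<and> (\<forall>k\<le>n. \<exists>w\<in>\<W> k. A \<subseteq> w)}" if x: "x \<in> topspace X" for x
  proof -
    have "\<forall>k. \<exists>w \<in> \<W> k. x \<in> w"
      using covers x unfolding open_cover_of_def by blast
    then obtain f where f: "\<And>k. f k \<in> \<W> k \<and> x \<in> f k" by metis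
    define A where "A = (\<Inter>k\<in>{..n}. f k) \<inter> topspace X"
    have "openin X A"
      unfolding A_def using f covers unfolding open_cover_of_def by (intro openin_INT) auto
    moreover have "\<forall>k\<le>n. \<exists>w\<in>\<W> k. A \<subseteq> w" using f unfolding A_def by blast
    ultimately show ?thesis using f x unfolding A_def by blast
  qed
  then show ?thesis unfolding open_cover_of_def using openin_subset by blast
qed

context
  fixes X :: "'a topology" and \<W> L :: "nat \<Rightarrow> 'a set set"
  assumes dev: "development_at_nonisolated X \<W>"
    and L_cover: "\<And>n. open_cover_of X (L n)"
    and L_lf: "\<And>n. locally_finite_in X (L n)"
    and L_refines: "\<And>n l k. l \<in> L n \<Longrightarrow> k \<le> n \<Longrightarrow> \<exists>w\<in>\<W> k. l \<subseteq> w"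
begin

lemma refinement_member_open: "l \<in> L n \<Longrightarrow> openin X l"
  using L_cover[of n] unfolding open_cover_of_def by blast

lemma refinement_member_at:
  assumes "x \<in> topspace X"
  obtains l where "l \<in> L n" "x \<in> l"
proof -
  have "x \<in> \<Union>(L n)" using L_cover[of n] assms unfolding open_cover_of_def by simp
  then show ?thesis using that by blast
qed

lemma refinement_locally_finite_at:
  assumes "x \<in> topspace X"
  shows "\<exists>G. openin X G \<and> x \<in> G \<and> finite {l \<in> L n. l \<inter> G \<noteq> {}}"
  using L_lf[of n] assms unfolding locally_finite_in_def by blast

lemma refinement_in_star:
  assumes "star V (\<W> i) \<subseteq> U" "i \<le> n" "l \<in> L n" "l \<inter> V \<noteq> {}"
  shows "l \<subseteq> U"
proof -
  obtain w where "w \<in> \<W> i" "l \<subseteq> w" using L_refines assms(2,3) by blast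
  then have "l \<subseteq> star V (\<W> i)" using assms(4) unfolding star_def by blast
  then show ?thesis using assms(1) by blast
qed

lemma development_star_neighbourhood:
  assumes "x \<in> topspace X - isolated_points X" "openin X U" "x \<in> U"
  obtains V i where "openin X V" "x \<in> V" "V \<subseteq> U" "star V (\<W> i) \<subseteq> U"
proof -
  obtain V i where V: "openin X V" "x \<in> V" "star V (\<W> i) \<subseteq> U"
    using dev assms unfolding development_at_nonisolated_def by blast
  moreover have "open_cover_of X (\<W> i)"
    using dev unfolding development_at_nonisolated_def by blast
  then have "V \<subseteq> star V (\<W> i)" using subset_star openin_subset[OF V(1)] by blast
  ultimately show ?thesis using that by blast
qed

text \<open>The union of the \<open>L n\<close> with the isolated singletons is a base: near a
  non-isolated point, a member of \<open>L i\<close> lies in the star of a small neighbourhood.\<close>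
lemma refinements_base:
  "is_base_of X (\<Union>(range L) \<union> (\<lambda>x. {x}) ` isolated_points X)"
  unfolding is_base_of_def
proof (intro conjI allI impI)
  show "\<forall>B \<in> \<Union>(range L) \<union> (\<lambda>x. {x}) ` isolated_points X. openin X B"
  proof
    fix B assume "B \<in> \<Union>(range L) \<union> (\<lambda>x. {x}) ` isolated_points X"
    then consider n where "B \<in> L n" | z where "z \<in> isolated_points X" "B = {z}" by auto
    then show "openin X B"
    proof cases
      case 1
      then show ?thesis by (rule refinement_member_open)
    next
      case 2
      then show ?thesis by (simp add: openin_isolated_singleton)
    qed
  qed
  fix U x assume Ux: "openin X U \<and> x \<in> U"
  show "\<exists>B \<in> \<Union>(range L) \<union> (\<lambda>x. {x}) ` isolated_points X. x \<in> B \<and> B \<subseteq> U"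
  proof (cases "x \<in> isolated_points X")
    case True
    show ?thesis by (rule bexI[of _ "{x}"]) (use True Ux in auto)
  next
    case False
    then have x: "x \<in> topspace X - isolated_points X"
      using Ux openin_subset[of X U] by auto
    obtain V i where V: "openin X V" "x \<in> V" "V \<subseteq> U" "star V (\<W> i) \<subseteq> U"
      using Ux by (auto elim: development_star_neighbourhood[OF x])
    obtain l where l: "l \<in> L i" "x \<in> l"
      using x by (auto elim: refinement_member_at)
    have "l \<subseteq> U" using refinement_in_star[OF V(4) order_refl l(1)] l(2) V(2) by blast
    then show ?thesis by (intro bexI[of _ l]) (use l in auto)
  qed
qed

text \<open>Regularity at \<open>x\<close>: with \<open>star V (\<W> i) \<subseteq> U\<close>, members of \<open>L n\<close> for \<open>n \<ge> i\<close>
  meeting \<open>V\<close> lie in \<open>U\<close>; the finitely many earlier \<open>L n\<close> are locally finite at \<open>x\<close>.\<close>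
lemma refinements_regular:
  assumes x: "x \<in> topspace X - isolated_points X"
  shows "regular_at X (\<Union>(range L) \<union> (\<lambda>x. {x}) ` isolated_points X) x"
  unfolding regular_at_def
proof (intro allI impI)
  fix U assume Ux: "openin X U \<and> x \<in> U"
  obtain V0 i where V0: "openin X V0" "x \<in> V0" "V0 \<subseteq> U" "star V0 (\<W> i) \<subseteq> U"
    using Ux by (auto elim: development_star_neighbourhood[OF x])
  have "\<forall>n. \<exists>G. openin X G \<and> x \<in> G \<and> finite {l \<in> L n. l \<inter> G \<noteq> {}}"
    using refinement_locally_finite_at x by blast
  then obtain g where g: "\<And>n. openin X (g n) \<and> x \<in> g n \<and> finite {l \<in> L n. l \<inter> g n \<noteq> {}}"
    by metis
  define V where "V = V0 \<inter> ((\<Inter>n\<in>{..<i}. g n) \<inter> topspace X)"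
  have V_open: "openin X V" unfolding V_def using V0(1) g by (intro openin_Int openin_INT) auto
  have xV: "x \<in> V" unfolding V_def using V0 g x by auto
  have VU: "V \<subseteq> U" using V0(3) unfolding V_def by blast
  have escaping: "{B \<in> \<Union>(range L) \<union> (\<lambda>x. {x}) ` isolated_points X. B \<inter> V \<noteq> {} \<and> \<not> B \<subseteq> U}
        \<subseteq> (\<Union>n\<in>{..<i}. {l \<in> L n. l \<inter> g n \<noteq> {}})"
  proof
    fix B
    assume "B \<in> {B \<in> \<Union>(range L) \<union> (\<lambda>x. {x}) ` isolated_points X. B \<inter> V \<noteq> {} \<and> \<not> B \<subseteq> U}"
    then have B: "B \<in> \<Union>(range L) \<union> (\<lambda>x. {x}) ` isolated_points X"
      and BV: "B \<inter> V \<noteq> {}" and BU: "\<not> B \<subseteq> U" by auto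
    text \<open>A singleton meeting \<open>V \<subseteq> U\<close> lies in \<open>U\<close>, so \<open>B\<close> belongs to some \<open>L n\<close>.\<close>
    have "B \<notin> (\<lambda>x. {x}) ` isolated_points X" using BV BU VU by auto
    then obtain n where n: "B \<in> L n" using B by auto
    have BV0: "B \<inter> V0 \<noteq> {}" using BV unfolding V_def by auto
    have "\<not> i \<le> n"
    proof
      assume "i \<le> n"
      then have "B \<subseteq> U" using BV0 by (rule refinement_in_star[OF V0(4) _ n])
      with BU show False ..
    qed
    then have "n \<in> {..<i}" by simp
    moreover from this have "B \<inter> g n \<noteq> {}" using BV unfolding V_def by auto
    ultimately show "B \<in> (\<Union>n\<in>{..<i}. {l \<in> L n. l \<inter> g n \<noteq> {}})"
      using n by blast
  qed
  have "finite (\<Union>n\<in>{..<i}. {l \<in> L n. l \<inter> g n \<noteq> {}})" using g by auto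
  with escaping have
    "finite {B \<in> \<Union>(range L) \<union> (\<lambda>x. {x}) ` isolated_points X. B \<inter> V \<noteq> {} \<and> \<not> B \<subseteq> U}"
    by (rule finite_subset)
  with V_open xV VU show "\<exists>V. openin X V \<and> x \<in> V \<and> V \<subseteq> U \<and>
      finite {B \<in> \<Union>(range L) \<union> (\<lambda>x. {x}) ` isolated_points X. B \<inter> V \<noteq> {} \<and> \<not> B \<subseteq> U}"
    by blast
qed

lemma refinements_regular_base:
  "regular_base_at_nonisolated X (\<Union>(range L) \<union> (\<lambda>x. {x}) ` isolated_points X)"
  using refinements_base refinements_regular by (simp add: regular_base_at_nonisolated_def)

end

text \<open>Paracompactness supplies the locally finite refinements \<open>L n\<close> of the finite
  intersections of the development.\<close>
lemma paracompact_development_regular_base: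
  assumes P: "paracompact_space X" and D: "development_at_nonisolated X \<W>"
  shows "\<exists>\<B>. regular_base_at_nonisolated X \<B>"
proof -
  define \<C> where "\<C> n = {A. openin X A \<and> (\<forall>k\<le>n. \<exists>w\<in>\<W> k. A \<subseteq> w)}" for n
  have W_cover: "\<And>i. open_cover_of X (\<W> i)"
    using D unfolding development_at_nonisolated_def by blast
  have "\<forall>n. \<exists>L. open_cover_of X L \<and> locally_finite_in X L \<and> (\<forall>V\<in>L. \<exists>U\<in>\<C> n. V \<subseteq> U)"
  proof
    fix n
    have "open_cover_of X (\<C> n)"
      unfolding \<C>_def by (rule common_refinement_open_cover[OF W_cover])
    then show "\<exists>L. open_cover_of X L \<and> locally_finite_in X L \<and> (\<forall>V\<in>L. \<exists>U\<in>\<C> n. V \<subseteq> U)"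
      using P unfolding paracompact_space_def by blast
  qed
  then obtain L where L_all: "\<forall>n. open_cover_of X (L n) \<and> locally_finite_in X (L n) \<and>
      (\<forall>V\<in>L n. \<exists>U\<in>\<C> n. V \<subseteq> U)"
    by metis
  have L: "\<And>n. open_cover_of X (L n)" "\<And>n. locally_finite_in X (L n)"
    using L_all by simp_all
  have L_refines_\<C>: "\<And>n. \<forall>V\<in>L n. \<exists>U\<in>\<C> n. V \<subseteq> U"
    using L_all by simp
  have L_refines: "\<exists>w\<in>\<W> k. l \<subseteq> w" if l: "l \<in> L n" and k: "k \<le> n" for n l k
  proof -
    obtain A where A: "A \<in> \<C> n" "l \<subseteq> A" using L_refines_\<C> l by blast
    then obtain w where "w \<in> \<W> k" "A \<subseteq> w" using k unfolding \<C>_def by blast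
    then show ?thesis using A(2) by blast
  qed
  have "regular_base_at_nonisolated X (\<Union>(range L) \<union> (\<lambda>x. {x}) ` isolated_points X)"
    by (rule refinements_regular_base[OF D L]) (rule L_refines)
  then show ?thesis ..
qed

theorem mainTheorem6:
  fixes X :: "'a topology"
  assumes "t1_space X"
  shows "(\<exists>\<B>. regular_base_at_nonisolated X \<B>) \<longleftrightarrow>
         (Hausdorff_space X \<and> paracompact_space X \<and>
          (\<exists>\<W>. development_at_nonisolated X \<W>))"
proof
  assume "\<exists>\<B>. regular_base_at_nonisolated X \<B>"
  then obtain \<B> where R: "regular_base_at_nonisolated X \<B>" ..
  have "Hausdorff_space X" by (rule regular_base_Hausdorff[OF assms R])
  moreover have "paracompact_space X" by (rule regular_base_paracompact[OF R])
  moreover have "development_at_nonisolated X (height_cover X \<B>)"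
    by (rule regular_base_development[OF assms R])
  ultimately show "Hausdorff_space X \<and> paracompact_space X \<and> (\<exists>\<W>. development_at_nonisolated X \<W>)"
    by blast
next
  assume "Hausdorff_space X \<and> paracompact_space X \<and> (\<exists>\<W>. development_at_nonisolated X \<W>)"
  then obtain \<W> where "paracompact_space X" "development_at_nonisolated X \<W>" by blast
  then show "\<exists>\<B>. regular_base_at_nonisolated X \<B>"
    by (rule paracompact_development_regular_base)
qed

end
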